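(* Assume $\mathrm{recc}(C)\subseteq\mathrm{recc}(P^B)$. Let $D\subseteq N_1\cup N_2$. If $M_D=\emptyset$, then $\mathrm{cl}\,\mathrm{conv}(P^B\setminus G_D^C)=P^B$.
   Context: Let $A\in\mathbb{R}^{m\times n}$ have full row rank, $b\in\mathbb{R}^m$, and $P=\{x\in\mathbb{R}^n_+:Ax=b\}$. Let $C\subseteq\mathbb{R}^n$ be an open convex set. Fix a basis $B$ of $P$ with nonbasic set $N=\{1,\dots,n\}\setminus B$. Write $P=\{x:x_i=\bar b_i-\sum_{j\in N}\bar a_{ij}x_j\ (i\in B),\ x\ge0\}$ with $\bar b\ge0$. The basic solution $\bar x$ has $\bar x_i=\bar b_i$ ($i\in B$) and $0$ ($i\in N$). $P^B$ is obtained by dropping $x_i\ge0$ for $i\in B$. For $j\in N$, $\bar r^j$ has $\bar r^j_k=-\bar a_{kj}$ ($k\in B$), $\bar r^j_j=1$, and $0$ otherwise. Thus $P^B=\{\bar x+\sum_{j\in N}x_j\bar r^j:x_j\ge0\}$. It is assumed that $\bar x\notin\mathrm{cl}(C)$. For $j\in N$, $\alpha_j=\inf\{\lambda\ge0:\bar x+\lambda\bar r^j\in C\}$ and $\beta_j=\sup\{\lambda\ge0:\bar x+\lambda\bar r^j\in C\}$, with $\alpha_j=+\infty$, $\beta_j=-\infty$ if the halfline misses $C$. Define - $N_1=\{j:\alpha_j\in(0,\infty),\beta_j=+\infty\}$; - $N_2=\{j:\alpha_j\in(0,\infty),\beta_j\in(\alpha_j,\infty)\}$. For a set $K$, $\mathrm{recc}(K)=\{d:x+\lambda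 d\in K\ \forall x\in K,\lambda\ge0\}$. $G_D^C=\{\bar x\}+\mathrm{conv}\big(\bigcup_{j\in D}\{\lambda\bar r^j:\lambda>\alpha_j\}\big)+\mathrm{recc}(C)$. For $(i,j)\in D\times(N\setminus D)$, $\gamma_{ij}=\sup\{\gamma\ge0:\alpha_i\bar r^i+\gamma\bar r^j\in\mathrm{recc}(G_D^C)\}$. Let $M_D=\{i\in D:\gamma_{ij}>0\ \forall j\in N\setminus D\}$. Here $\mathrm{cl}\,\mathrm{conv}$ is the closure of the convex hull. *)

theory Defs
  imports "HOL-Analysis.Analysis"
begin

text \<open>Setting: A is an m x n real matrix (rows indexed by 'm, columns by 'n),
  b a right-hand side, B a set of column indices (the basis), N = UNIV - B.\<close>

definition is_basis :: "real^'n^'m \<Rightarrow> 'n set \<Rightarrow> bool" where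
  "is_basis A B \<longleftrightarrow> card B = CARD('m) \<and> inj_on (\<lambda>j. column j A) B
      \<and> independent ((\<lambda>j. column j A) ` B)"

definition polyP :: "real^'n^'m \<Rightarrow> real^'m \<Rightarrow> (real^'n) set" where
  "polyP A b = {x. A *v x = b \<and> (\<forall>i. 0 \<le> x $ i)}"

definition polyPB :: "real^'n^'m \<Rightarrow> real^'m \<Rightarrow> 'n set \<Rightarrow> (real^'n) set" where
  "polyPB A b B = {x. A *v x = b \<and> (\<forall>j. j \<notin> B \<longrightarrow> 0 \<le> x $ j)}"

definition basic_sol :: "real^'n^'m \<Rightarrow> real^'m \<Rightarrow> 'n set \<Rightarrow> real^'n" where
  "basic_sol A b B = (THE x. A *v x = b \<and> (\<forall>j. j \<notin> B \<longrightarrow> x $ j = 0))"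

text \<open>Ray r^j for nonbasic j: r_j = 1, r_k = 0 for other nonbasic k, and A r = 0
  (equivalently r_k = - abar_kj for basic k).\<close>
definition basic_ray :: "real^'n^'m \<Rightarrow> 'n set \<Rightarrow> 'n \<Rightarrow> real^'n" where
  "basic_ray A B j = (THE r. A *v r = 0 \<and> r $ j = 1 \<and> (\<forall>k. k \<notin> B \<and> k \<noteq> j \<longrightarrow> r $ k = 0))"

definition recc :: "('a::real_vector) set \<Rightarrow> 'a set" where
  "recc K = {d. \<forall>x\<in>K. \<forall>t::real. t \<ge> 0 \<longrightarrow> x + t *\<^sub>R d \<in> K}"

text \<open>alpha_j and beta_j as extended reals (Inf {} = +inf, Sup {} = -inf).\<close>
definition alpha :: "real^'n \<Rightarrow> real^'n \<Rightarrow> (real^'n) set \<Rightarrow> ereal" where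
  "alpha xbar r C = Inf (ereal ` {t. t \<ge> 0 \<and> xbar + t *\<^sub>R r \<in> C})"

definition beta :: "real^'n \<Rightarrow> real^'n \<Rightarrow> (real^'n) set \<Rightarrow> ereal" where
  "beta xbar r C = Sup (ereal ` {t. t \<ge> 0 \<and> xbar + t *\<^sub>R r \<in> C})"

definition N1 :: "real^'n^'m \<Rightarrow> real^'m \<Rightarrow> 'n set \<Rightarrow> (real^'n) set \<Rightarrow> 'n set" where
  "N1 A b B C = {j. j \<notin> B \<and>
     (let a = alpha (basic_sol A b B) (basic_ray A B j) C;
          be = beta (basic_sol A b B) (basic_ray A B j) C
      in 0 < a \<and> a < \<infinity> \<and> be = \<infinity>)}"

definition N2 :: "real^'n^'m \<Rightarrow> real^'m \<Rightarrow> 'n set \<Rightarrow> (real^'n) set \<Rightarrow> 'n set" where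
  "N2 A b B C = {j. j \<notin> B \<and>
     (let a = alpha (basic_sol A b B) (basic_ray A B j) C;
          be = beta (basic_sol A b B) (basic_ray A B j) C
      in 0 < a \<and> a < \<infinity> \<and> a < be \<and> be < \<infinity>)}"

definition GDC :: "real^'n^'m \<Rightarrow> real^'m \<Rightarrow> 'n set \<Rightarrow> (real^'n) set \<Rightarrow> 'n set \<Rightarrow> (real^'n) set" where
  "GDC A b B C D =
     {basic_sol A b B + c + e | c e.
        c \<in> convex hull (\<Union>j\<in>D. {t *\<^sub>R basic_ray A B j | t.
               alpha (basic_sol A b B) (basic_ray A B j) C < ereal t})
        \<and> e \<in> recc C}"

text \<open>gamma_ij as an extended real supremum (-inf if the set is empty, +inf if unbounded).\<close>
definition gamma :: "real^'n^'m \<Rightarrow> real^'m \<Rightarrow> 'n set \<Rightarrow> (real^'n) set \<Rightarrow> 'n set \<Rightarrow> 'n \<Rightarrow> 'n \<Rightarrow> ereal" where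
  "gamma A b B C D i j = Sup (ereal ` {g. g \<ge> 0 \<and>
     real_of_ereal (alpha (basic_sol A b B) (basic_ray A B i) C) *\<^sub>R basic_ray A B i
       + g *\<^sub>R basic_ray A B j \<in> recc (GDC A b B C D)})"

definition MD :: "real^'n^'m \<Rightarrow> real^'m \<Rightarrow> 'n set \<Rightarrow> (real^'n) set \<Rightarrow> 'n set \<Rightarrow> 'n set" where
  "MD A b B C D = {i \<in> D. \<forall>j. j \<notin> B \<and> j \<notin> D \<longrightarrow> 0 < gamma A b B C D i j}"

end

theory Submission
  imports Defs
begin

(* The linear form w x = (SUM k:D. x_k / alpha_k) vanishes at xbar, is nonnegative on
   recc C (which lies in recc P^B, hence has nonnegative nonbasic entries) and exceeds 1 on
   every generator t r^k (t > alpha_k) of G = G_D^C; so G lies strictly beyond the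
   intersection cut w x >= 1, and xbar as well as the rays xbar + t r^i with i not in D
   avoid G. For i in D, M_D = {} provides a nonbasic j not in D with gamma_ij <= 0: no
   direction alpha_i r^i + g r^j with g > 0 recedes in G. As xbar + d in G already forces
   d in recc G, the points xbar + t r^i + e r^j avoid G, and e -> 0 puts the ray
   xbar + t r^i into the closure. Thus cl conv (P^B - G) is a closed convex set containing
   xbar and all extreme rays of P^B = xbar + cone {r^j}, so it is P^B. *)

lemma reccI: "(\<And>x t. x \<in> K \<Longrightarrow> 0 \<le> t \<Longrightarrow> x + t *\<^sub>R d \<in> K) \<Longrightarrow> d \<in> recc K"
  unfolding recc_def by blast

lemma recc_add_scaleR_mem:
  "d \<in> recc K \<Longrightarrow> x \<in> K \<Longrightarrow> 0 \<le> t \<Longrightarrow> x + t *\<^sub>R d \<in> K"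
  unfolding recc_def by blast

lemma recc_scaleR: "d \<in> recc K \<Longrightarrow> 0 \<le> s \<Longrightarrow> s *\<^sub>R d \<in> recc K"
  unfolding recc_def by (auto simp: scaleR_scaleR)

lemma recc_add:
  assumes "d \<in> recc K" "e \<in> recc K"
  shows "d + e \<in> recc K"
proof (rule reccI)
  fix x and t :: real
  assume "x \<in> K" "0 \<le> t"
  then have "(x + t *\<^sub>R d) + t *\<^sub>R e \<in> K"
    using assms by (intro recc_add_scaleR_mem)
  then show "x + t *\<^sub>R (d + e) \<in> K"
    by (simp add: algebra_simps)
qed

lemma convex_hull_scale_up_closed:
  assumes "\<And>s u. 1 \<le> s \<Longrightarrow> u \<in> U \<Longrightarrow> s *\<^sub>R u \<in> U"
    and "1 \<le> s" "c \<in> convex hull U"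
  shows "s *\<^sub>R c \<in> convex hull U"
proof -
  have "s *\<^sub>R c \<in> convex hull ((\<lambda>x. s *\<^sub>R x) ` U)"
    using assms(3) unfolding convex_hull_scaling by (rule imageI)
  also have "\<dots> \<subseteq> convex hull U"
    using assms(1,2) by (intro hull_mono) auto
  finally show ?thesis .
qed

lemma convex_scale_up_closed_add_scaleR:
  assumes "convex V" "\<And>s c. 1 \<le> s \<Longrightarrow> c \<in> V \<Longrightarrow> s *\<^sub>R c \<in> V"
    and "c \<in> V" "c0 \<in> V" "0 \<le> l"
  shows "c + l *\<^sub>R c0 \<in> V"
proof (cases "l = 0")
  case False
  define \<theta> where "\<theta> = min l (1/2)"
  have \<theta>: "0 < \<theta>" "\<theta> \<le> l" "\<theta> \<le> 1/2"
    using False assms(5) by (auto simp: \<theta>_def)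
  have "(1 - \<theta>) *\<^sub>R ((1 / (1 - \<theta>)) *\<^sub>R c) + \<theta> *\<^sub>R ((l / \<theta>) *\<^sub>R c0) \<in> V"
    using \<theta> by (intro convexD[OF assms(1)] assms(2,3,4)) auto
  then show ?thesis
    using \<theta> by (simp add: scaleR_scaleR)
qed (use assms in simp)

lemma recc_translated_sum:
  assumes "convex V" "\<And>s c. 1 \<le> s \<Longrightarrow> c \<in> V \<Longrightarrow> s *\<^sub>R c \<in> V"
    and "x0 + d \<in> {x0 + c + e | c e. c \<in> V \<and> e \<in> recc K}"
  shows "d \<in> recc {x0 + c + e | c e. c \<in> V \<and> e \<in> recc K}" (is "_ \<in> recc ?G")
proof (rule reccI)
  fix x and t :: real
  assume "x \<in> ?G" "0 \<le> t"
  then obtain c e where x: "x = x0 + c + e" "c \<in> V" "e \<in> recc K"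
    by blast
  obtain c0 e0 where d: "d = c0 + e0" "c0 \<in> V" "e0 \<in> recc K"
    using assms(3) by (auto simp: add.assoc)
  have "x + t *\<^sub>R d = x0 + (c + t *\<^sub>R c0) + (e + t *\<^sub>R e0)"
    using x d by (simp add: algebra_simps)
  moreover have "c + t *\<^sub>R c0 \<in> V"
    using x d \<open>0 \<le> t\<close> by (intro convex_scale_up_closed_add_scaleR[OF assms(1,2)])
  moreover have "e + t *\<^sub>R e0 \<in> recc K"
    using x d \<open>0 \<le> t\<close> by (intro recc_add recc_scaleR)
  ultimately show "x + t *\<^sub>R d \<in> ?G"
    by blast
qed

lemma mem_closure_if_shifts_mem:
  fixes x v :: "'a::real_normed_vector"
  assumes "\<And>\<epsilon>. 0 < \<epsilon> \<Longrightarrow> x + \<epsilon> *\<^sub>R v \<in> S"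
  shows "x \<in> closure S"
proof -
  have "(\<lambda>n. x + (1 / real (Suc n)) *\<^sub>R v) \<longlonglongrightarrow> x + 0 *\<^sub>R v"
    by (intro tendsto_intros LIMSEQ_inverse_real_of_nat[unfolded inverse_eq_divide])
  then have "(\<lambda>n. x + (1 / real (Suc n)) *\<^sub>R v) \<longlonglongrightarrow> x"
    by (simp only: scaleR_zero_left add_0_right)
  moreover have "x + (1 / real (Suc n)) *\<^sub>R v \<in> S" for n
    by (rule assms) simp
  ultimately show ?thesis
    unfolding closure_sequential by (intro exI[of _ "\<lambda>n. x + (1 / real (Suc n)) *\<^sub>R v"]) blast
qed

lemma convex_translated_cone_mem:
  fixes S :: "'a::real_vector set"
  assumes "convex S" "x0 \<in> S" "\<And>j t. j \<in> J \<Longrightarrow> 0 \<le> t \<Longrightarrow> x0 + t *\<^sub>R v j \<in> S"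
    and "finite J" "\<And>j. j \<in> J \<Longrightarrow> 0 \<le> c j"
  shows "x0 + (\<Sum>j\<in>J. c j *\<^sub>R v j) \<in> S"
  using assms(4,3,5)
proof (induction J arbitrary: c rule: finite_induct)
  case (insert i J)
  have "(1/2) *\<^sub>R (x0 + (\<Sum>j\<in>J. (2 * c j) *\<^sub>R v j)) + (1/2) *\<^sub>R (x0 + (2 * c i) *\<^sub>R v i) \<in> S"
    using insert by (intro convexD[OF assms(1)]) auto
  moreover have "(1/2) *\<^sub>R (x0 + (\<Sum>j\<in>J. (2 * c j) *\<^sub>R v j)) + (1/2) *\<^sub>R (x0 + (2 * c i) *\<^sub>R v i)
      = x0 + (c i *\<^sub>R v i + (\<Sum>j\<in>J. c j *\<^sub>R v j))"
    by (simp add: scaleR_add_right scaleR_sum_right scaleR_scaleR) (simp add: algebra_simps flip: scaleR_2)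
  ultimately show ?case
    using insert by simp
qed (use assms(2) in simp)

lemma is_basis_kernel_eq_0:
  fixes A :: "real^'n^'m"
  assumes "is_basis A B" "A *v z = 0" "\<And>k. k \<notin> B \<Longrightarrow> z $ k = 0"
  shows "z = 0"
proof (rule ccontr)
  assume "z \<noteq> 0"
  then obtain k where k: "z $ k \<noteq> 0" by (auto simp: vec_eq_iff)
  with assms(3) have kB: "k \<in> B" by auto
  let ?c = "\<lambda>j. column j A"
  have inj: "inj_on ?c B" and ind: "independent (?c ` B)"
    using assms(1) by (auto simp: is_basis_def)
  have "A *v z = (\<Sum>i\<in>B. z $ i *\<^sub>R ?c i)"
    unfolding matrix_mult_sum scalar_mult_eq_scaleR
    using assms(3) by (intro sum.mono_neutral_right) auto
  also have "\<dots> = (\<Sum>v\<in>?c ` B. z $ inv_into B ?c v *\<^sub>R v)"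
    using inj by (simp add: sum.reindex) (intro sum.cong refl, metis inv_into_f_f)
  finally have "(\<Sum>v\<in>?c ` B. z $ inv_into B ?c v *\<^sub>R v) = 0"
    using assms(2) by simp
  moreover have "z $ inv_into B ?c (?c k) \<noteq> 0"
    using inv_into_f_f[OF inj kB] k by simp
  ultimately have "dependent (?c ` B)"
    unfolding dependent_finite[OF finite_imageI[OF finite]]
    using kB by (intro exI[of _ "\<lambda>v. z $ inv_into B ?c v"] conjI bexI[of _ "?c k"]) auto
  with ind show False by simp
qed

lemma is_basis_solvable:
  fixes A :: "real^'n^'m"
  assumes "is_basis A B"
  obtains x where "A *v x = v" "\<And>k. k \<notin> B \<Longrightarrow> x $ k = 0"
proof -
  let ?c = "\<lambda>j. column j A"
  have inj: "inj_on ?c B" and ind: "independent (?c ` B)" and card: "card B = CARD('m)"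
    using assms by (auto simp: is_basis_def)
  have "card (?c ` B) = dim (UNIV :: (real^'m) set)"
    using inj card by (simp add: card_image dim_UNIV)
  then have "v \<in> span (?c ` B)"
    using card_eq_dim[of "?c ` B" UNIV] ind by auto
  then obtain u where u: "v = (\<Sum>w\<in>?c ` B. u w *\<^sub>R w)"
    using span_finite[OF finite_imageI[OF finite]] by blast
  define x where "x = (\<chi> k. if k \<in> B then u (?c k) else 0)"
  have "A *v x = (\<Sum>i\<in>B. x $ i *\<^sub>R ?c i)"
    unfolding matrix_mult_sum scalar_mult_eq_scaleR
    by (intro sum.mono_neutral_right) (auto simp: x_def)
  also have "\<dots> = v"
    using u inj by (simp add: x_def sum.reindex)
  finally show ?thesis
    by (rule that) (simp add: x_def)
qed

lemma basic_sol:
  fixes A :: "real^'n^'m"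
  assumes "is_basis A B"
  shows basic_sol_solves: "A *v basic_sol A b B = b"
    and basic_sol_nonbasic: "k \<notin> B \<Longrightarrow> basic_sol A b B $ k = 0"
proof -
  have "\<exists>!x. A *v x = b \<and> (\<forall>k. k \<notin> B \<longrightarrow> x $ k = 0)"
  proof (rule ex_ex1I)
    show "\<exists>x. A *v x = b \<and> (\<forall>k. k \<notin> B \<longrightarrow> x $ k = 0)"
      using is_basis_solvable[OF assms] by metis
    show "x = y" if "A *v x = b \<and> (\<forall>k. k \<notin> B \<longrightarrow> x $ k = 0)"
      and "A *v y = b \<and> (\<forall>k. k \<notin> B \<longrightarrow> y $ k = 0)" for x y
      using is_basis_kernel_eq_0[OF assms, of "x - y"] that
      by (simp add: matrix_vector_mult_diff_distrib)
  qed
  then have "A *v basic_sol A b B = b \<and> (\<forall>k. k \<notin> B \<longrightarrow> basic_sol A b B $ k = 0)"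
    unfolding basic_sol_def by (rule theI')
  then show "A *v basic_sol A b B = b" "k \<notin> B \<Longrightarrow> basic_sol A b B $ k = 0"
    by auto
qed

lemma basic_ray:
  fixes A :: "real^'n^'m"
  assumes "is_basis A B" "j \<notin> B"
  shows basic_ray_kernel: "A *v basic_ray A B j = 0"
    and basic_ray_nonbasic: "k \<notin> B \<Longrightarrow> basic_ray A B j $ k = (if k = j then 1 else 0)"
proof -
  let ?P = "\<lambda>r. A *v r = 0 \<and> r $ j = 1 \<and> (\<forall>k. k \<notin> B \<and> k \<noteq> j \<longrightarrow> r $ k = 0)"
  have "\<exists>!r. ?P r"
  proof (rule ex_ex1I)
    obtain y where y: "A *v y = - column j A" "\<And>k. k \<notin> B \<Longrightarrow> y $ k = 0"
      using is_basis_solvable[OF assms(1)] by blast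
    have "?P (y + axis j 1)"
      using y assms(2)
      by (simp add: matrix_vector_right_distrib matrix_vector_mult_basis) (simp add: axis_def)
    then show "\<exists>r. ?P r" ..
    show "x = y" if "?P x" "?P y" for x y
      using is_basis_kernel_eq_0[OF assms(1), of "x - y"] that
      by (simp add: matrix_vector_mult_diff_distrib) metis
  qed
  then have "?P (basic_ray A B j)"
    unfolding basic_ray_def by (rule theI')
  then show "A *v basic_ray A B j = 0" "k \<notin> B \<Longrightarrow> basic_ray A B j $ k = (if k = j then 1 else 0)"
    by auto
qed

lemma closed_polyPB: "closed (polyPB A b B)"
proof -
  have "polyPB A b B = {x. A *v x = b} \<inter> (\<Inter>j\<in>-B. {x. 0 \<le> x $ j})"
    by (auto simp: polyPB_def)
  moreover have "closed {x. A *v x = b}"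
    by (intro closed_Collect_eq matrix_vector_mult_linear_continuous_on continuous_on_const)
  moreover have "closed {x::real^'n. 0 \<le> x $ j}" for j
    by (intro closed_Collect_le continuous_intros)
  ultimately show ?thesis
    by (metis closed_INT closed_Int)
qed

lemma convex_polyPB: "convex (polyPB A b B)"
proof (rule convexI)
  fix x y and u v :: real
  assume "x \<in> polyPB A b B" "y \<in> polyPB A b B" "0 \<le> u" "0 \<le> v" "u + v = 1"
  then show "u *\<^sub>R x + v *\<^sub>R y \<in> polyPB A b B"
    by (auto simp: polyPB_def matrix_vector_right_distrib matrix_vector_mult_scaleR
        simp flip: scaleR_left_distrib)
qed

lemma basic_sol_in_polyPB: "is_basis A B \<Longrightarrow> basic_sol A b B \<in> polyPB A b B"
  by (simp add: polyPB_def basic_sol)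

lemma basic_ray_in_recc_polyPB:
  assumes "is_basis A B" "j \<notin> B"
  shows "basic_ray A B j \<in> recc (polyPB A b B)"
  using basic_ray[OF assms]
  by (auto simp: recc_def polyPB_def matrix_vector_right_distrib matrix_vector_mult_scaleR)

lemma recc_polyPB_nonbasic_nonneg:
  assumes "is_basis A B" "e \<in> recc (polyPB A b B)" "k \<notin> B"
  shows "0 \<le> e $ k"
proof -
  have "basic_sol A b B + 1 *\<^sub>R e \<in> polyPB A b B"
    using assms by (intro recc_add_scaleR_mem basic_sol_in_polyPB) auto
  then show ?thesis
    using assms basic_sol_nonbasic[OF assms(1)] by (simp add: polyPB_def)
qed

lemma polyPB_decomposition:
  assumes "is_basis A B" "x \<in> polyPB A b B"
  shows "x = basic_sol A b B + (\<Sum>j\<in>-B. x $ j *\<^sub>R basic_ray A B j)"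
proof -
  let ?z = "x - basic_sol A b B - (\<Sum>j\<in>-B. x $ j *\<^sub>R basic_ray A B j)"
  have "?z = 0"
  proof (rule is_basis_kernel_eq_0[OF assms(1)])
    show "A *v ?z = 0"
      using assms basic_ray_kernel[OF assms(1)]
      by (simp add: polyPB_def basic_sol matrix_vector_mult_diff_distrib vec.sum
          matrix_vector_mult_scaleR)
    fix k assume k: "k \<notin> B"
    have "(\<Sum>j\<in>-B. x $ j *\<^sub>R basic_ray A B j) $ k = (\<Sum>j\<in>-B. if j = k then x $ j else 0)"
      unfolding sum_component using k
      by (intro sum.cong refl) (auto simp: basic_ray_nonbasic[OF assms(1)])
    then show "?z $ k = 0"
      using k by (simp add: basic_sol_nonbasic[OF assms(1)])
  qed
  then show ?thesis by (simp add: algebra_simps)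
qed

lemma polyPB_subset_convex:
  assumes basis: "is_basis A B" and "convex S" "basic_sol A b B \<in> S"
    and "\<And>j t. j \<notin> B \<Longrightarrow> 0 \<le> t \<Longrightarrow> basic_sol A b B + t *\<^sub>R basic_ray A B j \<in> S"
  shows "polyPB A b B \<subseteq> S"
proof
  fix x assume x: "x \<in> polyPB A b B"
  then have "x = basic_sol A b B + (\<Sum>j\<in>-B. x $ j *\<^sub>R basic_ray A B j)"
    by (rule polyPB_decomposition[OF basis])
  also have "\<dots> \<in> S"
    using assms(2-4) x by (intro convex_translated_cone_mem) (auto simp: polyPB_def)
  finally show "x \<in> S" .
qed

abbreviation ray_alpha :: "real^'n^'m \<Rightarrow> real^'m \<Rightarrow> 'n set \<Rightarrow> (real^'n) set \<Rightarrow> 'n \<Rightarrow> ereal" where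
  "ray_alpha A b B C j \<equiv> alpha (basic_sol A b B) (basic_ray A B j) C"

lemma alpha_nonneg: "0 \<le> alpha x r C"
  unfolding alpha_def by (auto intro: Inf_greatest)

lemma GDC_generators_scale_up:
  assumes "1 \<le> s" "u \<in> (\<Union>j\<in>D. {t *\<^sub>R basic_ray A B j | t. ray_alpha A b B C j < ereal t})"
  shows "s *\<^sub>R u \<in> (\<Union>j\<in>D. {t *\<^sub>R basic_ray A B j | t. ray_alpha A b B C j < ereal t})"
proof -
  obtain j t where j: "j \<in> D" "ray_alpha A b B C j < ereal t" and u: "u = t *\<^sub>R basic_ray A B j"
    using assms(2) by blast
  have "0 < t"
    using alpha_nonneg j(2) by (metis ereal_less(2) order.strict_trans1)
  then have "ereal t \<le> ereal (s * t)"
    using assms(1) by simp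
  then have "ray_alpha A b B C j < ereal (s * t)"
    using j(2) by order
  then show ?thesis
    using j(1) u by (auto simp: scaleR_scaleR)
qed

lemma recc_GDC:
  assumes "basic_sol A b B + d \<in> GDC A b B C D"
  shows "d \<in> recc (GDC A b B C D)"
  using assms unfolding GDC_def
  by (intro recc_translated_sum convex_convex_hull convex_hull_scale_up_closed GDC_generators_scale_up)

lemma basic_sol_add_notin_GDC:
  assumes "d \<notin> recc (GDC A b B C D)" "0 < T"
  shows "basic_sol A b B + T *\<^sub>R d \<notin> GDC A b B C D"
proof
  assume "basic_sol A b B + T *\<^sub>R d \<in> GDC A b B C D"
  then have "(1 / T) *\<^sub>R (T *\<^sub>R d) \<in> recc (GDC A b B C D)"
    using assms(2) by (intro recc_scaleR recc_GDC) auto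
  with assms show False
    by simp
qed

lemma gamma_nonpos_notin_recc_GDC:
  assumes "\<not> 0 < gamma A b B C D i j" "0 < g"
  shows "real_of_ereal (ray_alpha A b B C i) *\<^sub>R basic_ray A B i + g *\<^sub>R basic_ray A B j
    \<notin> recc (GDC A b B C D)"
proof
  assume "real_of_ereal (ray_alpha A b B C i) *\<^sub>R basic_ray A B i + g *\<^sub>R basic_ray A B j
    \<in> recc (GDC A b B C D)"
  then have "ereal g \<le> gamma A b B C D i j"
    unfolding gamma_def using assms(2) by (intro Sup_upper) auto
  with assms show False
    by (metis ereal_less(2) order.strict_trans2)
qed

lemma N1_N2_alpha:
  assumes "j \<in> N1 A b B C \<union> N2 A b B C"
  shows "j \<notin> B" and "0 < real_of_ereal (ray_alpha A b B C j)"
    and "ray_alpha A b B C j = ereal (real_of_ereal (ray_alpha A b B C j))"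
proof -
  have "j \<notin> B \<and> 0 < ray_alpha A b B C j \<and> ray_alpha A b B C j < \<infinity>"
    using assms unfolding N1_def N2_def Let_def by auto
  then show "j \<notin> B" "0 < real_of_ereal (ray_alpha A b B C j)"
      "ray_alpha A b B C j = ereal (real_of_ereal (ray_alpha A b B C j))"
    by (cases "ray_alpha A b B C j"; simp)+
qed

definition intersection_cut :: "real^'n^'m \<Rightarrow> real^'m \<Rightarrow> 'n set \<Rightarrow> (real^'n) set \<Rightarrow> 'n set \<Rightarrow> real^'n" where
  "intersection_cut A b B C D =
     (\<chi> k. if k \<in> D then 1 / real_of_ereal (ray_alpha A b B C k) else 0)"

lemma inner_intersection_cut:
  "inner (intersection_cut A b B C D) x = (\<Sum>k\<in>D. x $ k / real_of_ereal (ray_alpha A b B C k))"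
proof -
  have "inner (intersection_cut A b B C D) x
      = (\<Sum>k\<in>UNIV. if k \<in> D then x $ k / real_of_ereal (ray_alpha A b B C k) else 0)"
    unfolding inner_vec_def intersection_cut_def by (intro sum.cong) auto
  then show ?thesis
    by (simp add: sum.If_cases)
qed

lemma inner_intersection_cut_basic_sol:
  assumes "is_basis A B" "D \<inter> B = {}"
  shows "inner (intersection_cut A b B C D) (basic_sol A b B) = 0"
  using assms by (auto simp: inner_intersection_cut basic_sol_nonbasic disjoint_iff intro!: sum.neutral)

lemma inner_intersection_cut_basic_ray:
  assumes "is_basis A B" "D \<inter> B = {}" "j \<notin> B"
  shows "inner (intersection_cut A b B C D) (basic_ray A B j)
    = (if j \<in> D then 1 / real_of_ereal (ray_alpha A b B C j) else 0)"
proof -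
  have "inner (intersection_cut A b B C D) (basic_ray A B j)
      = (\<Sum>k\<in>D. if k = j then 1 / real_of_ereal (ray_alpha A b B C k) else 0)"
    unfolding inner_intersection_cut using assms
    by (intro sum.cong refl) (auto simp: basic_ray_nonbasic disjoint_iff)
  then show ?thesis
    by simp
qed

lemma GDC_beyond_intersection_cut:
  assumes basis: "is_basis A B" and recc_sub: "recc C \<subseteq> recc (polyPB A b B)"
    and D_sub: "D \<subseteq> N1 A b B C \<union> N2 A b B C" and y: "y \<in> GDC A b B C D"
  shows "1 < inner (intersection_cut A b B C D) y"
proof -
  let ?w = "intersection_cut A b B C D"
  let ?a = "\<lambda>k. real_of_ereal (ray_alpha A b B C k)"
  let ?U = "\<Union>j\<in>D. {t *\<^sub>R basic_ray A B j | t. ray_alpha A b B C j < ereal t}"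
  have DB: "D \<inter> B = {}"
    using D_sub N1_N2_alpha(1) by blast
  obtain c e where y: "y = basic_sol A b B + c + e" and c: "c \<in> convex hull ?U"
    and e: "e \<in> recc C"
    using y unfolding GDC_def by blast
  have "?U \<subseteq> {z. 1 < inner ?w z}"
  proof clarify
    fix j t assume j: "j \<in> D" "ray_alpha A b B C j < ereal t"
    have jN: "j \<in> N1 A b B C \<union> N2 A b B C"
      using D_sub j(1) by blast
    have "?a j < t"
      using j(2) by (subst (asm) N1_N2_alpha(3)[OF jN]) simp
    moreover have "0 < ?a j"
      using N1_N2_alpha(2)[OF jN] .
    moreover have "inner ?w (basic_ray A B j) = 1 / ?a j"
      using j(1) N1_N2_alpha(1)[OF jN] by (simp add: inner_intersection_cut_basic_ray[OF basis DB])
    ultimately show "1 < inner ?w (t *\<^sub>R basic_ray A B j)"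
      by (simp add: less_divide_eq)
  qed
  then have "1 < inner ?w c"
    using hull_minimal[of ?U _ convex, OF _ convex_halfspace_gt] c by blast
  moreover have "0 \<le> inner ?w e"
    unfolding inner_intersection_cut
    using recc_polyPB_nonbasic_nonneg[OF basis] recc_sub e D_sub N1_N2_alpha(1,2)
    by (intro sum_nonneg divide_nonneg_pos) blast+
  ultimately show ?thesis
    using y by (simp add: inner_add_right inner_intersection_cut_basic_sol[OF basis DB])
qed

lemma basic_sol_in_polyPB_diff_GDC:
  assumes basis: "is_basis A B" and recc_sub: "recc C \<subseteq> recc (polyPB A b B)"
    and D_sub: "D \<subseteq> N1 A b B C \<union> N2 A b B C"
  shows "basic_sol A b B \<in> polyPB A b B - GDC A b B C D"
proof -
  have "D \<inter> B = {}"
    using D_sub N1_N2_alpha(1) by blast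
  then show ?thesis
    using GDC_beyond_intersection_cut[OF assms] inner_intersection_cut_basic_sol[OF basis]
      basic_sol_in_polyPB[OF basis] by fastforce
qed

lemma basic_sol_add_ray_in_closure:
  assumes basis: "is_basis A B" and recc_sub: "recc C \<subseteq> recc (polyPB A b B)"
    and D_sub: "D \<subseteq> N1 A b B C \<union> N2 A b B C" and MD_empty: "MD A b B C D = {}"
    and i: "i \<notin> B" and t: "0 \<le> t"
  shows "basic_sol A b B + t *\<^sub>R basic_ray A B i \<in> closure (polyPB A b B - GDC A b B C D)"
proof -
  let ?xb = "basic_sol A b B" and ?r = "basic_ray A B"
  have DB: "D \<inter> B = {}"
    using D_sub N1_N2_alpha(1) by blast
  have in_polyPB: "?xb + s *\<^sub>R ?r k \<in> polyPB A b B" if "k \<notin> B" "0 \<le> s" for k s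
    using that by (intro recc_add_scaleR_mem basic_ray_in_recc_polyPB basic_sol_in_polyPB basis)
  consider (nonD) "i \<notin> D" | (zero) "t = 0" | (D) "i \<in> D" "0 < t"
    using t by fastforce
  then show ?thesis
  proof cases
    case nonD
    have "inner (intersection_cut A b B C D) (?xb + t *\<^sub>R ?r i) = 0"
      using nonD i by (simp add: inner_add_right inner_intersection_cut_basic_sol[OF basis DB]
          inner_intersection_cut_basic_ray[OF basis DB])
    then have "?xb + t *\<^sub>R ?r i \<notin> GDC A b B C D"
      using GDC_beyond_intersection_cut[OF basis recc_sub D_sub] by fastforce
    then show ?thesis
      using in_polyPB[OF i t] by (intro closure_subset[THEN subsetD] DiffI)
  next
    case zero
    then show ?thesis
      using basic_sol_in_polyPB_diff_GDC[OF basis recc_sub D_sub]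
      by (simp add: closure_subset[THEN subsetD])
  next
    case D
    let ?a = "real_of_ereal (ray_alpha A b B C i)"
    have a: "0 < ?a"
      using D(1) D_sub N1_N2_alpha(2) by blast
    obtain j where j: "j \<notin> B" "\<not> 0 < gamma A b B C D i j"
      using MD_empty D(1) unfolding MD_def by blast
    show ?thesis
    proof (rule mem_closure_if_shifts_mem)
      fix \<epsilon> :: real assume "0 < \<epsilon>"
      then have "?xb + (t / ?a) *\<^sub>R (?a *\<^sub>R ?r i + (\<epsilon> * ?a / t) *\<^sub>R ?r j) \<notin> GDC A b B C D"
        using a D(2) by (intro basic_sol_add_notin_GDC gamma_nonpos_notin_recc_GDC j(2)) auto
      moreover have "?xb + (t / ?a) *\<^sub>R (?a *\<^sub>R ?r i + (\<epsilon> * ?a / t) *\<^sub>R ?r j)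
          = ?xb + t *\<^sub>R ?r i + \<epsilon> *\<^sub>R ?r j"
        using a D(2) by (simp add: scaleR_add_right scaleR_scaleR)
      moreover have "?xb + t *\<^sub>R ?r i + \<epsilon> *\<^sub>R ?r j \<in> polyPB A b B"
        using \<open>0 < \<epsilon>\<close>
        by (intro recc_add_scaleR_mem[OF basic_ray_in_recc_polyPB[OF basis j(1)] in_polyPB[OF i t]])
          simp
      ultimately show "?xb + t *\<^sub>R ?r i + \<epsilon> *\<^sub>R ?r j \<in> polyPB A b B - GDC A b B C D"
        by simp
    qed
  qed
qed

theorem proposition4:
  fixes A :: "real^'n^'m" and b :: "real^'m" and B :: "'n set" and C :: "(real^'n) set"
    and D :: "'n set"
  assumes full_rank: "rank A = CARD('m)"
    and basis: "is_basis A B"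
    and feasible: "basic_sol A b B \<in> polyP A b"
    and C_open: "open C" and C_convex: "convex C"
    and xbar_notin: "basic_sol A b B \<notin> closure C"
    and recc_sub: "recc C \<subseteq> recc (polyPB A b B)"
    and D_sub: "D \<subseteq> N1 A b B C \<union> N2 A b B C"
    and MD_empty: "MD A b B C D = {}"
  shows "closure (convex hull (polyPB A b B - GDC A b B C D)) = polyPB A b B"
proof
  let ?S = "closure (convex hull (polyPB A b B - GDC A b B C D))"
  show "?S \<subseteq> polyPB A b B"
    by (intro closure_minimal hull_minimal closed_polyPB convex_polyPB) auto
  have "closure (polyPB A b B - GDC A b B C D) \<subseteq> ?S"
    by (intro closure_mono hull_subset)
  then show "polyPB A b B \<subseteq> ?S"
    using basic_sol_in_polyPB_diff_GDC[OF basis recc_sub D_sub]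
      basic_sol_add_ray_in_closure[OF basis recc_sub D_sub MD_empty]
    by (intro polyPB_subset_convex[OF basis] convex_closure convex_convex_hull)
      (auto intro: closure_subset[THEN subsetD])
qed

end
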